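(* Let $r>1$, $p\in(0,1)$, $q=1-p$, and $z\ge 0$. Let $g_z:\mathbb{Z}_+\to\mathbb{R}$ be defined by $g_z(0)=0$ and, for $k\ge 1$, $$g_z(k)=-\sum_{j=k}^{\infty}\frac{r(r+1)\cdots(r+j-1)}{r(r+1)\cdots(r+k-1)}\,\frac{(k-1)!}{j!}\,q^{j-k}\Big[(j-z)^+-\mathbb{E}[(\mathrm{N}_{r,p}-z)^+]\Big].$$ Then for all $k\ge 0$: (i) $|g_z(k)|\le p^{-(r+1)}$; (ii) $|\Delta g_z(k)|\le 2p^{-(r+1)}-p^{-1}$.
   Context: $\mathbb{Z}_+=\{0,1,2,\ldots\}$. $x^+=\max\{x,0\}$. $\mathrm{N}_{r,p}$ denotes a negative binomial random variable with $\mathbb{P}(\mathrm{N}_{r,p}=k)=\binom{r+k-1}{k}p^rq^k=\frac{\Gamma(r+k)}{k!\,\Gamma(r)}p^rq^k$ for $k\in\mathbb{Z}_+$, where $r>1$ and $q=1-p\in(0,1)$. $\Delta g(k)=g(k+1)-g(k)$ is the forward difference. The function $g_z$ solves $q(r+k)g(k+1)-kg(k)=(k-z)^+-\mathbb{E}[(\mathrm{N}_{r,p}-z)^+]$ for $k\in\mathbb{Z}_+$. *)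

theory Defs
  imports "HOL-Analysis.Analysis"
begin

definition negbin_pmf :: "real \<Rightarrow> real \<Rightarrow> nat \<Rightarrow> real" where
  "negbin_pmf r p k = Gamma (r + real k) / (fact k * Gamma r) * p powr r * (1 - p) ^ k"

definition negbin_excess :: "real \<Rightarrow> real \<Rightarrow> real \<Rightarrow> real" where
  "negbin_excess r p z = (\<Sum>k. max (real k - z) 0 * negbin_pmf r p k)"

definition g_sol :: "real \<Rightarrow> real \<Rightarrow> real \<Rightarrow> nat \<Rightarrow> real" where
  "g_sol r p z k = (if k = 0 then 0 else
     - (\<Sum>i. pochhammer r (k + i) / pochhammer r k * (fact (k - 1) / fact (k + i))
            * (1 - p) ^ i * (max (real (k + i) - z) 0 - negbin_excess r p z)))"

end

theory Submission
  imports Defs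
begin

text \<open>Write w(j) = r(r+1)...(r+j-1) q^j / j!, so that P(N = j) = p^r w(j), and let
  h(j) = (j - z)^+ and mu = E h(N). For k >= 1, g_z(k) is -1/(k w(k)) times the tail
  sum_{j >= k} w(j) (h(j) - mu) of a series with sum zero. Since h is nondecreasing, such tails
  are nonnegative, so g_z <= 0. Since j - h(j) is nondecreasing as well, the same argument bounds
  that tail by the tail of w(j) (j - E N), which telescopes to k w(k) / p; hence g_z >= -1/p.
  Both claimed bounds follow from -1/p <= g_z <= 0 and 1/p <= p^(-(r+1)).\<close>

definition negbin_weight :: "real \<Rightarrow> real \<Rightarrow> nat \<Rightarrow> real" where
  "negbin_weight r q j = pochhammer r j / fact j * q ^ j"

lemma negbin_weight_pos: "r > 0 \<Longrightarrow> q > 0 \<Longrightarrow> negbin_weight r q j > 0"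
  unfolding negbin_weight_def by (simp add: pochhammer_pos)

lemma Suc_times_negbin_weight_Suc:
  "real (Suc j) * negbin_weight r q (Suc j) = pochhammer r (Suc j) / fact j * q ^ Suc j"
proof -
  have "real (Suc j) * negbin_weight r q (Suc j)
      = (real (Suc j) / fact (Suc j)) * pochhammer r (Suc j) * q ^ Suc j"
    by (simp add: negbin_weight_def)
  also have "real (Suc j) / fact (Suc j) = 1 / (fact j :: real)"
    by (simp add: fact_Suc del: of_nat_Suc)
  finally show ?thesis by simp
qed

lemma negbin_weight_recurrence:
  "real (Suc j) * negbin_weight r q (Suc j) = q * (r + real j) * negbin_weight r q j"
  unfolding Suc_times_negbin_weight_Suc by (simp add: negbin_weight_def pochhammer_rec' field_simps)

lemma negbin_weight_index_shift:
  "real (Suc j) * negbin_weight r q (Suc j) = r * q * negbin_weight (r + 1) q j"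
  unfolding Suc_times_negbin_weight_Suc by (simp add: negbin_weight_def pochhammer_rec field_simps)

lemma negbin_weight_sums:
  assumes "r > 0" "0 < q" "q < 1"
  shows "negbin_weight r q sums (1 - q) powr (-r)"
proof -
  have "(\<lambda>n. ((-r) gchoose n) * (-q) ^ n) sums (1 + -q) powr (-r)"
    using assms by (intro gen_binomial_real) simp
  moreover have "((-r) gchoose n) * (-q) ^ n = negbin_weight r q n" for n
  proof -
    have "((-r) gchoose n) * (-q) ^ n
        = ((-1) ^ n * (-1) ^ n) * (pochhammer r n / fact n * q ^ n)"
      unfolding gbinomial_pochhammer power_minus[of q n] by (simp add: mult_ac)
    also have "(-1::real) ^ n * (-1) ^ n = 1"
      by (simp flip: power_mult_distrib)
    finally show ?thesis by (simp add: negbin_weight_def)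
  qed
  ultimately show ?thesis by simp
qed

lemma summable_index_times_negbin_weight:
  assumes "r > 0" "0 < q" "q < 1"
  shows "summable (\<lambda>j. real j * negbin_weight r q j)"
proof -
  have "summable (\<lambda>j. r * q * negbin_weight (r + 1) q j)"
    using negbin_weight_sums[of "r + 1" q] assms by (intro summable_mult) (auto simp: sums_iff)
  hence "summable (\<lambda>j. real (Suc j) * negbin_weight r q (Suc j))"
    by (simp only: negbin_weight_index_shift)
  thus ?thesis by (subst summable_Suc_iff[symmetric]) simp
qed

lemma negbin_pmf_eq_weight:
  assumes "r > 0"
  shows "negbin_pmf r p j = p powr r * negbin_weight r (1 - p) j"
proof -
  have "r \<notin> \<int>\<^sub>\<le>\<^sub>0" using assms by (auto elim!: nonpos_Ints_cases)
  hence "pochhammer r j = Gamma (r + real j) / Gamma r" by (rule pochhammer_Gamma)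
  thus ?thesis unfolding negbin_pmf_def negbin_weight_def by (simp add: field_simps)
qed

text \<open>If \<open>u k \<ge> m\<close> every term of the tail is nonnegative; otherwise every term of the
  complementary head is nonpositive, and the tail is minus the head.\<close>
lemma tail_sum_nonneg_if_mono:
  fixes a u :: "nat \<Rightarrow> real"
  assumes "mono u" and "\<And>j. a j \<ge> 0" and "(\<lambda>j. a j * (u j - m)) sums 0"
  shows "0 \<le> (\<Sum>i. a (k + i) * (u (k + i) - m))"
proof -
  let ?t = "\<lambda>j. a j * (u j - m)"
  have sm: "summable ?t" and s0: "suminf ?t = 0" using assms(3) by (auto simp: sums_iff)
  have tail_eq: "(\<Sum>i. ?t (k + i)) = - (\<Sum>i<k. ?t i)"
    using suminf_split_initial_segment[OF sm, of k] s0 by (simp add: add.commute)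
  show ?thesis
  proof (cases "m \<le> u k")
    case True
    have "0 \<le> ?t (k + i)" for i
      using monoD[OF assms(1), of k "k + i"] True assms(2)[of "k + i"] by simp
    moreover have "summable (\<lambda>i. ?t (k + i))"
      using summable_ignore_initial_segment[OF sm, of k] by (simp add: add.commute)
    ultimately show ?thesis by (intro suminf_nonneg)
  next
    case False
    have "?t j \<le> 0" if "j \<in> {..<k}" for j
      using monoD[OF assms(1), of j k] that False assms(2)[of j]
      by (simp add: mult_nonneg_nonpos)
    hence "(\<Sum>i<k. ?t i) \<le> 0" by (rule sum_nonpos)
    thus ?thesis using tail_eq by simp
  qed
qed

text \<open>r q / p is the mean of N_{r,p}; by the recurrence, the summand is F j - F (j + 1)
  with F j = j w(j) / p.\<close>
lemma negbin_weight_mean_tail_sums: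
  assumes "0 < p" "p < 1" "r > 0"
  shows "(\<lambda>i. negbin_weight r (1 - p) (k + i) * (real (k + i) - r * (1 - p) / p))
           sums (real k * negbin_weight r (1 - p) k / p)"
proof -
  let ?w = "negbin_weight r (1 - p)"
  define F where "F j = real j * ?w j / p" for j
  have "(\<lambda>j. real j * ?w j) \<longlonglongrightarrow> 0"
    using summable_index_times_negbin_weight[of r "1 - p"] assms
    by (intro summable_LIMSEQ_zero) auto
  hence "F \<longlonglongrightarrow> 0"
    using tendsto_divide_zero[of "\<lambda>j. real j * ?w j" sequentially p] by (simp add: F_def[abs_def])
  hence "(\<lambda>i. F (i + k)) \<longlonglongrightarrow> 0" by (rule LIMSEQ_ignore_initial_segment)
  hence "(\<lambda>i. F (i + k) - F (Suc i + k)) sums (F k - 0)"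
    using telescope_sums'[of "\<lambda>i. F (i + k)" 0] by simp
  moreover have "F j - F (Suc j) = ?w j * (real j - r * (1 - p) / p)" for j
  proof -
    have "F j - F (Suc j) = (real j * ?w j - (1 - p) * (r + real j) * ?w j) / p"
      unfolding F_def using negbin_weight_recurrence[of j r "1 - p"] by (simp add: diff_divide_distrib)
    also have "\<dots> = ?w j * (real j - r * (1 - p) / p)"
      using assms by (simp add: field_simps)
    finally show ?thesis .
  qed
  hence "(\<lambda>i. F (i + k) - F (Suc i + k))
      = (\<lambda>i. ?w (k + i) * (real (k + i) - r * (1 - p) / p))"
    by (simp add: add.commute)
  ultimately show ?thesis by (simp add: F_def)
qed

lemma negbin_weight_excess_centered_sums:
  assumes "r > 0" "0 < p" "p < 1" "z \<ge> 0"
  shows "(\<lambda>j. negbin_weight r (1 - p) j * (max (real j - z) 0 - negbin_excess r p z)) sums 0"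
proof -
  let ?w = "negbin_weight r (1 - p)" and ?h = "\<lambda>j::nat. max (real j - z) 0"
  have "summable (\<lambda>j. ?w j * ?h j)"
  proof (rule summable_comparison_test[OF _ summable_index_times_negbin_weight])
    show "\<exists>N. \<forall>n\<ge>N. norm (?w n * ?h n) \<le> real n * ?w n"
      using negbin_weight_pos[of r "1 - p"] assms
      by (intro exI[of _ 0]) (auto simp: max_def less_imp_le)
  qed (use assms in auto)
  have excess: "negbin_excess r p z = p powr r * (\<Sum>j. ?w j * ?h j)"
    unfolding negbin_excess_def negbin_pmf_eq_weight[OF assms(1)]
    using suminf_mult[OF \<open>summable (\<lambda>j. ?w j * ?h j)\<close>, of "p powr r"] by (simp add: mult_ac)
  have "(\<lambda>j. ?w j * ?h j - ?w j * negbin_excess r p z)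
          sums ((\<Sum>j. ?w j * ?h j) - p powr (-r) * negbin_excess r p z)"
    using negbin_weight_sums[of r "1 - p"] assms
    by (intro sums_diff summable_sums[OF \<open>summable (\<lambda>j. ?w j * ?h j)\<close>] sums_mult2) auto
  moreover have "p powr (-r) * negbin_excess r p z = (\<Sum>j. ?w j * ?h j)"
    using assms by (simp add: excess powr_minus field_simps)
  ultimately show ?thesis by (simp add: right_diff_distrib)
qed

lemma g_sol_eq_tail:
  assumes "r > 0" "0 < p" "p < 1" "z \<ge> 0" "k \<ge> 1"
  shows "g_sol r p z k = - (\<Sum>i. negbin_weight r (1 - p) (k + i)
           * (max (real (k + i) - z) 0 - negbin_excess r p z)) / (real k * negbin_weight r (1 - p) k)"
proof -
  let ?w = "negbin_weight r (1 - p)"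
  let ?t = "\<lambda>j. ?w j * (max (real j - z) 0 - negbin_excess r p z)"
  have coef: "pochhammer r (k + i) / pochhammer r k * (fact (k - 1) / fact (k + i)) * (1 - p) ^ i
      = ?w (k + i) / (real k * ?w k)" for i
  proof -
    have "fact k = real k * fact (k - 1)" using assms(5) by (simp add: fact_reduce)
    moreover have "pochhammer r k > 0" using assms(1) by (simp add: pochhammer_pos)
    ultimately show ?thesis using assms(3,5)
      by (simp add: negbin_weight_def power_add field_simps)
  qed
  have "summable (\<lambda>i. ?t (k + i))"
    using summable_ignore_initial_segment[of ?t k] negbin_weight_excess_centered_sums[OF assms(1-4)]
    by (simp add: sums_iff add.commute)
  hence "(\<Sum>i. ?t (k + i) / (real k * ?w k)) = (\<Sum>i. ?t (k + i)) / (real k * ?w k)"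
    by (rule suminf_divide)
  thus ?thesis using assms(5) unfolding g_sol_def coef by (simp add: mult.commute)
qed

lemma g_sol_nonpos:
  assumes "r > 0" "0 < p" "p < 1" "z \<ge> 0"
  shows "g_sol r p z k \<le> 0"
proof (cases "k = 0")
  case False
  have "mono (\<lambda>j::nat. max (real j - z) 0)"
    by (auto simp: mono_def max_def)
  hence "0 \<le> (\<Sum>i. negbin_weight r (1 - p) (k + i)
             * (max (real (k + i) - z) 0 - negbin_excess r p z))"
    using negbin_weight_pos[of r "1 - p"] assms
    by (intro tail_sum_nonneg_if_mono[OF _ _ negbin_weight_excess_centered_sums])
       (auto intro: less_imp_le)
  moreover have "0 < real k * negbin_weight r (1 - p) k"
    using False negbin_weight_pos[of r "1 - p" k] assms by simp
  ultimately show ?thesis using False assms by (simp add: g_sol_eq_tail)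
qed (simp add: g_sol_def)

lemma g_sol_ge:
  assumes "r > 0" "0 < p" "p < 1" "z \<ge> 0"
  shows "- 1 / p \<le> g_sol r p z k"
proof (cases "k = 0")
  case False
  let ?w = "negbin_weight r (1 - p)" and ?h = "\<lambda>j::nat. max (real j - z) 0"
  let ?m = "r * (1 - p) / p - negbin_excess r p z"
  have centered: "(\<lambda>j. ?w j * ((real j - ?h j) - ?m)) sums 0"
  proof -
    have "(\<lambda>j. ?w j * (real j - r * (1 - p) / p) - ?w j * (?h j - negbin_excess r p z)) sums (0 - 0)"
      using negbin_weight_mean_tail_sums[of p r 0] assms
      by (intro sums_diff negbin_weight_excess_centered_sums) auto
    thus ?thesis by (simp add: algebra_simps)
  qed
  define S where "S = (\<Sum>i. ?w (k + i) * ((real (k + i) - ?h (k + i)) - ?m))"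
  have "0 \<le> S"
    unfolding S_def using negbin_weight_pos[of r "1 - p"] assms
    by (intro tail_sum_nonneg_if_mono[OF _ _ centered] less_imp_le) (auto simp: mono_def max_def)
  have "(\<lambda>i. ?w (k + i) * (real (k + i) - r * (1 - p) / p)
            - ?w (k + i) * ((real (k + i) - ?h (k + i)) - ?m))
          sums (real k * ?w k / p - S)"
    unfolding S_def using negbin_weight_mean_tail_sums[of p r k] assms
      summable_ignore_initial_segment[OF sums_summable[OF centered], of k]
    by (intro sums_diff summable_sums) (auto simp: add.commute)
  hence "(\<Sum>i. ?w (k + i) * (?h (k + i) - negbin_excess r p z)) = real k * ?w k / p - S"
    by (simp add: sums_iff algebra_simps)
  moreover have "0 < real k * ?w k"
    using False negbin_weight_pos[of r "1 - p" k] assms by simp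
  ultimately have "g_sol r p z k = - (real k * ?w k / p - S) / (real k * ?w k)"
    using False assms by (simp add: g_sol_eq_tail)
  also have "\<dots> = - ((real k * ?w k) / (real k * ?w k)) / p + S / (real k * ?w k)"
    by (simp add: diff_divide_distrib)
  also have "\<dots> = - 1 / p + S / (real k * ?w k)"
    using False negbin_weight_pos[of r "1 - p" k] assms by simp
  finally have "g_sol r p z k = - 1 / p + S / (real k * ?w k)" .
  with \<open>0 \<le> S\<close> \<open>0 < real k * ?w k\<close> show ?thesis by simp
qed (use assms in \<open>simp add: g_sol_def\<close>)

theorem lemma2p1:
  fixes r p z :: real
  assumes "r > 1" and "0 < p" and "p < 1" and "z \<ge> 0"
  shows "\<forall>k::nat. \<bar>g_sol r p z k\<bar> \<le> p powr (-(r + 1))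
           \<and> \<bar>g_sol r p z (k + 1) - g_sol r p z k\<bar> \<le> 2 * p powr (-(r + 1)) - 1 / p"
proof
  fix k :: nat
  have bounds: "- (1 / p) \<le> g_sol r p z j \<and> g_sol r p z j \<le> 0" for j
    using g_sol_ge[of r p z j] g_sol_nonpos[of r p z j] assms by simp
  have "p powr (r + 1) \<le> p"
    using powr_le_one_le[of p "r + 1"] assms by simp
  hence "1 / p \<le> 1 / p powr (r + 1)"
    using assms by (intro divide_left_mono) auto
  also have "\<dots> = p powr (-(r + 1))"
    by (rule powr_minus_divide[symmetric])
  finally have "1 / p \<le> p powr (-(r + 1))" .
  with bounds[of k] bounds[of "k + 1"]
  show "\<bar>g_sol r p z k\<bar> \<le> p powr (-(r + 1))
           \<and> \<bar>g_sol r p z (k + 1) - g_sol r p z k\<bar> \<le> 2 * p powr (-(r + 1)) - 1 / p"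
    unfolding abs_le_iff by linarith
qed

end
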